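(* Let $k\ge3$, let $G$ be a graph, and let $L$ be a $k$-list assignment for $G$. Let $S=G[\{v_1,\dots,v_s\}]$ be an induced subgraph with $s\le k$. If for every $i\in\{1,\dots,s\}$ the number of neighbors of $v_i$ in $V(G)\setminus V(S)$ is less than $i$, then $S$ is safe in $G$ (with respect to $L$).
   Context: A $k$-list assignment $L$ for $G$ assigns to each vertex $v$ a set $L(v)$ of exactly $k$ colors; an $L$-coloring is a proper vertex coloring $f$ with $f(v)\in L(v)$. For an integer $n$ and $k\ge1$, $n\bmod^* k$ is the unique $m\in\{1,\dots,k\}$ with $n\equiv m\pmod k$. If $|V(G)|=n\ge 1$, an $L$-coloring $f$ of $G$ is strongly equitable (SE) if every color class has at most $\lceil n/k\rceil$ vertices and the number of colors whose class has exactly $\lceil n/k\rceil$ vertices (the full classes) is at most $n\bmod^* k$; the empty graph is regarded as SE $L$-colorable. A subgraph $S\subseteq G$ is safe in $G$ if every SE $L$-coloring of $G-V(S)$ (with the restriction of $L$) can be extended to an SE $L$-coloring of $G$. *)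

theory Defs
  imports Main
begin

definition graph :: "'a set \<Rightarrow> ('a \<Rightarrow> 'a \<Rightarrow> bool) \<Rightarrow> bool" where
  "graph V E \<longleftrightarrow> finite V \<and> (\<forall>u w. E u w \<longrightarrow> u \<in> V \<and> w \<in> V)
     \<and> (\<forall>u w. E u w \<longrightarrow> E w u) \<and> (\<forall>u. \<not> E u u)"

definition list_assignment :: "'a set \<Rightarrow> nat \<Rightarrow> ('a \<Rightarrow> 'c set) \<Rightarrow> bool" where
  "list_assignment V k L \<longleftrightarrow> (\<forall>v\<in>V. finite (L v) \<and> card (L v) = k)"

definition modstar :: "nat \<Rightarrow> nat \<Rightarrow> nat" where
  "modstar n k = (if n mod k = 0 then k else n mod k)"

definition L_coloring :: "'a set \<Rightarrow> ('a \<Rightarrow> 'a \<Rightarrow> bool) \<Rightarrow> ('a \<Rightarrow> 'c set) \<Rightarrow> ('a \<Rightarrow> 'c) \<Rightarrow> bool" where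
  "L_coloring W E L f \<longleftrightarrow> (\<forall>v\<in>W. f v \<in> L v) \<and> (\<forall>u\<in>W. \<forall>w\<in>W. E u w \<longrightarrow> f u \<noteq> f w)"

definition color_class :: "'a set \<Rightarrow> ('a \<Rightarrow> 'c) \<Rightarrow> 'c \<Rightarrow> 'a set" where
  "color_class W f c = {v\<in>W. f v = c}"

text \<open>Strongly equitable L-coloring of G[W] (k colors per list); ceiling(n/k) = (n+k-1) div k.
  The empty graph is regarded as SE colorable.\<close>
definition SE_coloring :: "'a set \<Rightarrow> ('a \<Rightarrow> 'a \<Rightarrow> bool) \<Rightarrow> nat \<Rightarrow> ('a \<Rightarrow> 'c set) \<Rightarrow> ('a \<Rightarrow> 'c) \<Rightarrow> bool" where
  "SE_coloring W E k L f \<longleftrightarrow> W = {} \<or>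
     (L_coloring W E L f \<and>
      (\<forall>c. card (color_class W f c) \<le> (card W + k - 1) div k) \<and>
      card {c. card (color_class W f c) = (card W + k - 1) div k} \<le> modstar (card W) k)"

definition safe :: "'a set \<Rightarrow> ('a \<Rightarrow> 'a \<Rightarrow> bool) \<Rightarrow> nat \<Rightarrow> ('a \<Rightarrow> 'c set) \<Rightarrow> 'a set \<Rightarrow> bool" where
  "safe V E k L T \<longleftrightarrow> (\<forall>f. SE_coloring (V - T) E k L f \<longrightarrow>
      (\<exists>g. SE_coloring V E k L g \<and> (\<forall>v\<in>V - T. g v = f v)))"

end

theory Submission
  imports Defs
begin

text \<open>Color v_s, ..., v_1 greedily in this order with pairwise distinct colors. When v_i is
  colored, its outside neighbors block fewer than i colors and the vertices already colored
  block s - i, so fewer than k colors of its list are forbidden. Distinct colors on S make every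
  color class grow by at most one, so the new coloring is strongly equitable as soon as few enough
  of the colors used on S are full in G - S. With r = n mod* k full classes allowed in G - S, at most
  r + s - k of them may be reused; once this budget is spent, all full colors can still be avoided
  because the forbidden colors together with the full ones number at most (s - 1 - (r + s - k)) + r
  = k - 1.\<close>

text \<open>Here (n + k - 1) div k is the ceiling of n / k, so the first equation says
  n = (\<lceil>n/k\<rceil> - 1) k + n mod* k, written without subtraction.\<close>
lemma ceil_div_modstar:
  assumes "0 < k"
  shows "n + k = (n + k - 1) div k * k + modstar n k" "0 < modstar n k" "modstar n k \<le> k"
proof -
  show "0 < modstar n k" "modstar n k \<le> k"
    using assms by (auto simp: modstar_def less_imp_le)
  have n: "n = n div k * k + n mod k" by simp
  show "n + k = (n + k - 1) div k * k + modstar n k"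
  proof (cases "n mod k = 0")
    case True
    have "(n + k - 1) div k = n div k + (k - 1) div k"
    proof -
      have "n + k - 1 = (k - 1) + n div k * k" using True assms n by simp
      moreover have "((k - 1) + n div k * k) div k = n div k + (k - 1) div k"
        using assms by (intro div_mult_self1) simp
      ultimately show ?thesis by simp
    qed
    then show ?thesis using True assms n by (simp add: modstar_def)
  next
    case False
    have "(n div k + 1) * k = n div k * k + k" by simp
    then have "n + k - 1 = (n mod k - 1) + (n div k + 1) * k"
      using False n by linarith
    moreover have "((n mod k - 1) + (n div k + 1) * k) div k = n div k + 1 + (n mod k - 1) div k"
      using assms by (intro div_mult_self1) simp
    moreover have "(n mod k - 1) div k = 0"
      using assms by (simp add: less_imp_diff_less)
    ultimately have "(n + k - 1) div k = n div k + 1" by simp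
    then show ?thesis using False n by (simp add: modstar_def algebra_simps)
  qed
qed

lemma ceil_div_modstar_eqI:
  assumes "0 < r" "r \<le> k" "n + k = c * k + r"
  shows "(n + k - 1) div k = c" "modstar n k = r"
proof -
  have k: "0 < k" using assms by simp
  have "n + k - 1 = (r - 1) + c * k" using assms by simp
  moreover have "((r - 1) + c * k) div k = c + (r - 1) div k"
    using k by (intro div_mult_self1) simp
  ultimately show c: "(n + k - 1) div k = c" using assms by simp
  have "c * k + r = c * k + modstar n k"
    using ceil_div_modstar(1)[OF k, of n] assms(3) c by simp
  then show "modstar n k = r" by simp
qed

lemma ceil_div_modstar_add:
  assumes "0 < k" "m \<le> k"
  shows "modstar n k + m \<le> k \<Longrightarrow>
      (n + m + k - 1) div k = (n + k - 1) div k \<and> modstar (n + m) k = modstar n k + m"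
    and "k < modstar n k + m \<Longrightarrow>
      (n + m + k - 1) div k = (n + k - 1) div k + 1 \<and> modstar (n + m) k = modstar n k + m - k"
proof -
  note n = ceil_div_modstar[OF assms(1), of n]
  show "(n + m + k - 1) div k = (n + k - 1) div k \<and> modstar (n + m) k = modstar n k + m"
    if "modstar n k + m \<le> k"
    using ceil_div_modstar_eqI[of "modstar n k + m" k "n + m" "(n + k - 1) div k"] n that by simp
  show "(n + m + k - 1) div k = (n + k - 1) div k + 1 \<and> modstar (n + m) k = modstar n k + m - k"
    if "k < modstar n k + m"
    using ceil_div_modstar_eqI[of "modstar n k + m - k" k "n + m" "(n + k - 1) div k + 1"] n that assms(2)
    by (simp add: algebra_simps)
qed

lemma exists_fresh_color_within_budget:
  assumes "finite L" "finite B" "finite C" "finite F"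
    and "card B + card C < card L" and "card B + card C + card F < card L + t"
    and "card (C \<inter> F) \<le> t"
  shows "\<exists>x\<in>L. x \<notin> B \<and> x \<notin> C \<and> card (insert x C \<inter> F) \<le> t"
proof (cases "card (C \<inter> F) < t")
  case True
  have "card (B \<union> C) < card L" using assms card_Un_le[of B C] by linarith
  then obtain x where "x \<in> L" "x \<notin> B \<union> C"
    using assms card_mono[of "B \<union> C" L] by (meson finite_UnI not_le subsetI)
  moreover have "card (insert x C \<inter> F) \<le> Suc (card (C \<inter> F))"
    using assms(3) by (simp add: Int_insert_left card_insert_if)
  ultimately show ?thesis using True by auto
next
  case False
  then have full: "card (C \<inter> F) = t" using assms(7) by simp
  have "card (C - F) + t = card C"
    using full card_Diff_subset_Int[of C F] assms(3) card_mono[of C "C \<inter> F"] by simp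
  then have "card (B \<union> (C - F) \<union> F) < card L"
    using assms(6) card_Un_le[of B "C - F"] card_Un_le[of "B \<union> (C - F)" F] by linarith
  then obtain x where "x \<in> L" "x \<notin> B \<union> (C - F) \<union> F"
    using assms card_mono[of "B \<union> (C - F) \<union> F" L] by (meson finite_UnI finite_Diff not_le subsetI)
  moreover from this have "insert x C \<inter> F = C \<inter> F" by auto
  ultimately show ?thesis using full by auto
qed

lemma exists_inj_choice_within_budget:
  fixes L B :: "nat \<Rightarrow> 'c set"
  assumes L: "\<And>i. i \<in> {1..s} \<Longrightarrow> finite (L i) \<and> card (L i) = k"
    and B: "\<And>i. i \<in> {1..s} \<Longrightarrow> finite (B i) \<and> card (B i) < i"
    and "finite F" and "s \<le> k"
  shows "\<exists>c. inj_on c {1..s} \<and> (\<forall>i\<in>{1..s}. c i \<in> L i - B i)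
           \<and> card (c ` {1..s} \<inter> F) \<le> card F + s - k"
proof -
  define t where "t = card F + s - k"
  have "\<exists>c. inj_on c {m<..s} \<and> (\<forall>i\<in>{m<..s}. c i \<in> L i - B i) \<and> card (c ` {m<..s} \<inter> F) \<le> t"
    if "m \<le> s" for m
    using that
  proof (induction m rule: inc_induct)
    case base
    show ?case by simp
  next
    case (step n)
    then obtain c where inj: "inj_on c {Suc n<..s}" and col: "\<forall>i\<in>{Suc n<..s}. c i \<in> L i - B i"
      and budget: "card (c ` {Suc n<..s} \<inter> F) \<le> t" by blast
    define C where "C = c ` {Suc n<..s}"
    have i: "Suc n \<in> {1..s}" using step.hyps by simp
    have "card C = s - Suc n" unfolding C_def using inj by (simp add: card_image)
    then have "card (B (Suc n)) + card C < k" "card (B (Suc n)) + card C + card F < k + t"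
      using B[OF i] step.hyps \<open>s \<le> k\<close> unfolding t_def by linarith+
    then obtain x where x: "x \<in> L (Suc n)" "x \<notin> B (Suc n)" "x \<notin> C" "card (insert x C \<inter> F) \<le> t"
      using exists_fresh_color_within_budget[of "L (Suc n)" "B (Suc n)" C F t]
        L[OF i] B[OF i] \<open>finite F\<close> budget unfolding C_def by auto
    have split: "{n<..s} = insert (Suc n) {Suc n<..s}" using step.hyps by auto
    let ?c = "c(Suc n := x)"
    have "inj_on ?c {n<..s}" using inj x(3) unfolding split C_def by (auto simp: inj_on_def)
    moreover have "\<forall>i\<in>{n<..s}. ?c i \<in> L i - B i" using col x unfolding split by auto
    moreover have "?c ` {n<..s} = insert x C" unfolding split C_def by auto
    ultimately show ?case using x(4) by metis
  qed
  moreover have "{0<..s} = {1..s}" by auto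
  ultimately show ?thesis unfolding t_def by (metis le0)
qed

definition full_colors :: "'a set \<Rightarrow> nat \<Rightarrow> ('a \<Rightarrow> 'c) \<Rightarrow> 'c set" where
  "full_colors W k f = {c. card (color_class W f c) = (card W + k - 1) div k}"

definition SE_balanced :: "'a set \<Rightarrow> nat \<Rightarrow> ('a \<Rightarrow> 'c) \<Rightarrow> bool" where
  "SE_balanced W k f \<longleftrightarrow> (\<forall>c. card (color_class W f c) \<le> (card W + k - 1) div k)
     \<and> card (full_colors W k f) \<le> modstar (card W) k"

lemma SE_coloring_iff:
  "SE_coloring W E k L f \<longleftrightarrow> W = {} \<or> L_coloring W E L f \<and> SE_balanced W k f"
  unfolding SE_coloring_def SE_balanced_def full_colors_def ..

lemma color_class_cong: "\<forall>x\<in>W. g x = f x \<Longrightarrow> color_class W g = color_class W f"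
  unfolding color_class_def by auto

lemma full_colors_subset_image:
  assumes "finite W" "W \<noteq> {}" "0 < k"
  shows "full_colors W k f \<subseteq> f ` W"
proof
  fix c assume "c \<in> full_colors W k f"
  moreover have "0 < card W" using assms by (simp add: card_gt_0_iff)
  then have "k div k \<le> (card W + k - 1) div k"
    by (intro div_le_mono) linarith
  then have "0 < (card W + k - 1) div k" using assms(3) by simp
  ultimately have "color_class W f c \<noteq> {}" unfolding full_colors_def by auto
  then show "c \<in> f ` W" unfolding color_class_def by auto
qed

lemma card_color_class_Un_inj:
  assumes "finite W" "finite T" "W \<inter> T = {}" "inj_on g T"
  shows "card (color_class (W \<union> T) g c) = card (color_class W g c) + (if c \<in> g ` T then 1 else 0)"
proof -
  have "color_class (W \<union> T) g c = color_class W g c \<union> color_class T g c"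
    unfolding color_class_def by auto
  moreover have "card (color_class T g c) = (if c \<in> g ` T then 1 else 0)"
  proof (cases "c \<in> g ` T")
    case True
    then obtain x where "x \<in> T" "g x = c" by auto
    then have "color_class T g c = {x}"
      using assms(4) unfolding color_class_def by (auto dest: inj_onD)
    then show ?thesis using True by simp
  next
    case False
    then have "color_class T g c = {}" unfolding color_class_def by auto
    then show ?thesis using False by simp
  qed
  moreover have "color_class W g c \<inter> color_class T g c = {}"
    using assms(3) unfolding color_class_def by auto
  ultimately show ?thesis
    using assms(1,2) by (simp add: card_Un_disjoint color_class_def)
qed

lemma SE_balanced_inj:
  assumes "finite T" "T \<noteq> {}" "card T \<le> k" "inj_on g T"
  shows "SE_balanced T k g"
proof -
  have "0 < card T" using assms by (simp add: card_gt_0_iff)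
  then have ceil: "(card T + k - 1) div k = 1" "modstar (card T) k = card T"
    using ceil_div_modstar_eqI[of "card T" k "card T" 1] assms(3) by simp_all
  have class_card: "card (color_class T g c) = (if c \<in> g ` T then 1 else 0)" for c
    using card_color_class_Un_inj[of "{}" T g c] assms by (simp add: color_class_def)
  have "full_colors T k g \<subseteq> g ` T" unfolding full_colors_def using ceil class_card by auto
  then have "card (full_colors T k g) \<le> card T"
    using assms(1) card_mono card_image_le by (metis finite_imageI le_trans)
  then show ?thesis unfolding SE_balanced_def using ceil class_card by simp
qed

lemma SE_balanced_Un_inj:
  assumes "finite W" "W \<noteq> {}" "finite T" "W \<inter> T = {}" "inj_on g T" "card T \<le> k" "0 < k"
    and bal: "SE_balanced W k g"
    and budget: "card (g ` T \<inter> full_colors W k g) \<le> modstar (card W) k + card T - k"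
  shows "SE_balanced (W \<union> T) k g"
proof -
  define c0 where "c0 = (card W + k - 1) div k"
  define r where "r = modstar (card W) k"
  define F where "F = full_colors W k g"
  have cardWT: "card (W \<union> T) = card W + card T" using assms by (simp add: card_Un_disjoint)
  have class_card: "card (color_class (W \<union> T) g c) = card (color_class W g c) + (if c \<in> g ` T then 1 else 0)"
    for c by (rule card_color_class_Un_inj[OF assms(1,3,4,5)])
  have le: "card (color_class W g c) \<le> c0" for c using bal unfolding SE_balanced_def c0_def by blast
  have F_eq: "F = {c. card (color_class W g c) = c0}" unfolding F_def full_colors_def c0_def ..
  have F: "finite F" "card F \<le> r"
    using full_colors_subset_image[OF assms(1,2,7), of g] bal assms(1)
    unfolding F_def r_def SE_balanced_def by (auto intro: finite_subset)
  have gT: "finite (g ` T)" "card (g ` T) = card T"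
    using assms by (simp_all add: card_image)
  have budget': "card (g ` T \<inter> F) \<le> r + card T - k"
    using budget unfolding F_def r_def .
  show ?thesis
  proof (cases "r + card T \<le> k")
    case True
    then have ceil: "(card (W \<union> T) + k - 1) div k = c0" "modstar (card (W \<union> T)) k = r + card T"
      using ceil_div_modstar_add(1)[OF assms(7,6)] cardWT unfolding c0_def r_def by simp_all
    have "card (g ` T \<inter> F) = 0" using budget' True by simp
    then have disj: "g ` T \<inter> F = {}" using F(1) by simp
    have classes: "card (color_class (W \<union> T) g c) \<le> c0" for c
      using class_card[of c] le[of c] disj F_eq by (cases "c \<in> g ` T") (auto simp: le_less)
    have "full_colors (W \<union> T) k g \<subseteq> F \<union> g ` T"
      using class_card F_eq unfolding full_colors_def ceil(1) by auto
    then have "card (full_colors (W \<union> T) k g) \<le> card (F \<union> g ` T)"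
      using F(1) gT(1) by (intro card_mono) simp_all
    also have "\<dots> \<le> r + card T"
      using F(2) gT(2) card_Un_le[of F "g ` T"] by linarith
    finally show ?thesis unfolding SE_balanced_def ceil using classes by simp
  next
    case False
    then have ceil: "(card (W \<union> T) + k - 1) div k = c0 + 1"
        "modstar (card (W \<union> T)) k = r + card T - k"
      using ceil_div_modstar_add(2)[OF assms(7,6)] cardWT unfolding c0_def r_def by simp_all
    have classes: "card (color_class (W \<union> T) g c) \<le> c0 + 1" for c
      using class_card[of c] le[of c] by simp
    have "full_colors (W \<union> T) k g \<subseteq> g ` T \<inter> F"
    proof
      fix c assume "c \<in> full_colors (W \<union> T) k g"
      then have eq: "card (color_class W g c) + (if c \<in> g ` T then 1 else 0) = c0 + 1"
        using class_card[of c] unfolding full_colors_def ceil(1) by simp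
      then have "c \<in> g ` T" using le[of c] by (cases "c \<in> g ` T") simp_all
      with eq show "c \<in> g ` T \<inter> F" using F_eq by simp
    qed
    then have "card (full_colors (W \<union> T) k g) \<le> card (g ` T \<inter> F)"
      using F(1) by (intro card_mono) simp_all
    also have "\<dots> \<le> r + card T - k" by (rule budget')
    finally show ?thesis unfolding SE_balanced_def ceil using classes by simp
  qed
qed

lemma SE_coloring_cong:
  assumes "\<forall>x\<in>W. g x = f x"
  shows "SE_coloring W E k L g \<longleftrightarrow> SE_coloring W E k L f"
  using assms color_class_cong[OF assms] unfolding SE_coloring_def L_coloring_def by simp

lemma L_coloring_Un_inj:
  assumes "L_coloring W E L g" "inj_on g T" "\<forall>t\<in>T. g t \<in> L t"
    and "\<forall>t\<in>T. \<forall>w\<in>W. E t w \<longrightarrow> g t \<noteq> g w"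
    and "\<forall>u w. E u w \<longrightarrow> E w u" "\<forall>u. \<not> E u u"
  shows "L_coloring (W \<union> T) E L g"
  using assms unfolding L_coloring_def by (metis Un_iff inj_onD)

lemma SE_coloring_Un_inj:
  assumes "finite W" "finite T" "W \<inter> T = {}" "card T \<le> k" "0 < k"
    and sym: "\<forall>u w. E u w \<longrightarrow> E w u" and irrefl: "\<forall>u. \<not> E u u"
    and SE: "SE_coloring W E k L g" and inj: "inj_on g T" and lists: "\<forall>t\<in>T. g t \<in> L t"
    and proper: "\<forall>t\<in>T. \<forall>w\<in>W. E t w \<longrightarrow> g t \<noteq> g w"
    and budget: "W \<noteq> {} \<Longrightarrow> card (g ` T \<inter> full_colors W k g) \<le> modstar (card W) k + card T - k"
  shows "SE_coloring (W \<union> T) E k L g"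
proof (cases "W = {}")
  case True
  have "L_coloring T E L g"
    using L_coloring_Un_inj[of "{}" E L g T] inj lists sym irrefl by (simp add: L_coloring_def)
  then show ?thesis
    using True SE_balanced_inj[OF assms(2) _ assms(4) inj] unfolding SE_coloring_iff by auto
next
  case False
  then have "L_coloring W E L g" "SE_balanced W k g" using SE unfolding SE_coloring_iff by auto
  then show ?thesis
    using L_coloring_Un_inj[OF _ inj lists proper sym irrefl]
      SE_balanced_Un_inj[OF assms(1) False assms(2,3) inj assms(4,5) _ budget[OF False]]
    unfolding SE_coloring_iff by blast
qed

text \<open>The budget uses truncated subtraction: when n mod* k + |T| \<le> k, with n = |V - T|, the colors on
  T must avoid the full classes of f altogether.\<close>
definition admissible_coloring ::
    "'a set \<Rightarrow> ('a \<Rightarrow> 'a \<Rightarrow> bool) \<Rightarrow> nat \<Rightarrow> ('a \<Rightarrow> 'c set) \<Rightarrow> 'a set \<Rightarrow> ('a \<Rightarrow> 'c) \<Rightarrow> ('a \<Rightarrow> 'c) \<Rightarrow> bool" where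
  "admissible_coloring V E k L T f c \<longleftrightarrow> inj_on c T
     \<and> (\<forall>t\<in>T. c t \<in> L t \<and> (\<forall>w\<in>V - T. E t w \<longrightarrow> c t \<noteq> f w))
     \<and> (V - T \<noteq> {} \<longrightarrow> card (c ` T \<inter> full_colors (V - T) k f) \<le> modstar (card (V - T)) k + card T - k)"

lemma safe_if_admissible_colorings:
  assumes "graph V E" "T \<subseteq> V" "card T \<le> k" "0 < k"
    and admissible: "\<And>f. SE_coloring (V - T) E k L f \<Longrightarrow> \<exists>c. admissible_coloring V E k L T f c"
  shows "safe V E k L T"
  unfolding safe_def
proof (intro allI impI)
  fix f assume SE: "SE_coloring (V - T) E k L f"
  obtain c where inj: "inj_on c T" and col: "\<forall>t\<in>T. c t \<in> L t \<and> (\<forall>w\<in>V - T. E t w \<longrightarrow> c t \<noteq> f w)"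
    and budget: "V - T \<noteq> {} \<longrightarrow> card (c ` T \<inter> full_colors (V - T) k f) \<le> modstar (card (V - T)) k + card T - k"
    using admissible[OF SE] unfolding admissible_coloring_def by blast
  define g where "g x = (if x \<in> T then c x else f x)" for x
  have agree: "\<forall>x\<in>V - T. g x = f x" unfolding g_def by simp
  have "full_colors (V - T) k g = full_colors (V - T) k f"
    unfolding full_colors_def color_class_cong[OF agree] ..
  moreover have "g ` T = c ` T" "inj_on g T" using inj unfolding g_def by (auto simp: inj_on_def)
  moreover have "finite V" "\<forall>u w. E u w \<longrightarrow> E w u" "\<forall>u. \<not> E u u"
    using assms(1) unfolding graph_def by auto
  ultimately have "SE_coloring ((V - T) \<union> T) E k L g"
    using SE_coloring_Un_inj[of "V - T" T k E L g] SE_coloring_cong[OF agree] SE col budget assms(2-4)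
    unfolding g_def by (auto intro: finite_subset)
  then show "\<exists>g. SE_coloring V E k L g \<and> (\<forall>x\<in>V - T. g x = f x)"
    using agree assms(2) by (metis Un_Diff_cancel2 Un_absorb2)
qed

lemma exists_admissible_coloring:
  assumes "finite V" "list_assignment V k L" "inj_on v {1..s}" "v ` {1..s} \<subseteq> V" "s \<le> k" "0 < k"
    and degree: "\<forall>i\<in>{1..s}. card {u \<in> V - v ` {1..s}. E (v i) u} < i"
    and SE: "SE_coloring (V - v ` {1..s}) E k L f"
  shows "\<exists>c. admissible_coloring V E k L (v ` {1..s}) f c"
proof -
  let ?T = "v ` {1..s}"
  define F where "F = (if V - ?T = {} then {} else full_colors (V - ?T) k f)"
  define B where "B i = f ` {u \<in> V - ?T. E (v i) u}" for i
  have "finite F"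
  proof (cases "V - ?T = {}")
    case False
    then have "F \<subseteq> f ` (V - ?T)"
      using full_colors_subset_image[of "V - ?T" k f] assms(1,6) unfolding F_def by simp
    then show ?thesis using assms(1) finite_subset by blast
  qed (simp add: F_def)
  moreover have "finite (B i) \<and> card (B i) < i" if "i \<in> {1..s}" for i
    using card_image_le[of "{u \<in> V - ?T. E (v i) u}" f] degree that assms(1)
    unfolding B_def by fastforce
  moreover have "finite (L (v i)) \<and> card (L (v i)) = k" if "i \<in> {1..s}" for i
    using assms(2,4) that unfolding list_assignment_def image_subset_iff by simp
  ultimately obtain c where inj: "inj_on c {1..s}" and col: "\<forall>i\<in>{1..s}. c i \<in> L (v i) - B i"
    and budget: "card (c ` {1..s} \<inter> F) \<le> card F + s - k"
    using exists_inj_choice_within_budget[of s "L \<circ> v" k B F] assms(5) by auto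
  define c' where "c' = c \<circ> the_inv_into {1..s} v"
  have c'v: "c' (v i) = c i" if "i \<in> {1..s}" for i
    using assms(3) that unfolding c'_def by (simp add: the_inv_into_f_f)
  have "inj_on c' ?T"
    unfolding c'_def using inj_on_the_inv_into[OF assms(3)] the_inv_into_onto[OF assms(3)] inj
    by (simp add: comp_inj_on)
  moreover have "\<forall>t\<in>?T. c' t \<in> L t \<and> (\<forall>w\<in>V - ?T. E t w \<longrightarrow> c' t \<noteq> f w)"
    using col c'v unfolding B_def by fastforce
  moreover have "card (c' ` ?T \<inter> full_colors (V - ?T) k f) \<le> modstar (card (V - ?T)) k + card ?T - k"
    if nonempty: "V - ?T \<noteq> {}"
  proof -
    have "card F \<le> modstar (card (V - ?T)) k"
      using SE nonempty unfolding F_def SE_coloring_iff SE_balanced_def by simp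
    moreover have "c' ` ?T = c ` {1..s}" unfolding image_image using c'v by (intro image_cong) auto
    ultimately show ?thesis
      using budget nonempty assms(3) unfolding F_def by (simp add: card_image)
  qed
  ultimately show ?thesis unfolding admissible_coloring_def by blast
qed

theorem lemma4p1:
  fixes V :: "'a set" and E :: "'a \<Rightarrow> 'a \<Rightarrow> bool" and k s :: nat
    and L :: "'a \<Rightarrow> 'c set" and v :: "nat \<Rightarrow> 'a"
  assumes "k \<ge> 3"
    and "graph V E"
    and "list_assignment V k L"
    and "inj_on v {1..s}" and "v ` {1..s} \<subseteq> V"
    and "s \<le> k"
    and "\<forall>i\<in>{1..s}. card {u \<in> V - v ` {1..s}. E (v i) u} < i"
  shows "safe V E k L (v ` {1..s})"
proof (rule safe_if_admissible_colorings[OF assms(2,5)])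
  show "card (v ` {1..s}) \<le> k" using assms(4,6) by (simp add: card_image)
  show "0 < k" using assms(1) by simp
  have "finite V" using assms(2) unfolding graph_def by simp
  then show "\<exists>c. admissible_coloring V E k L (v ` {1..s}) f c"
    if "SE_coloring (V - v ` {1..s}) E k L f" for f
    using exists_admissible_coloring[OF _ assms(3-6) _ assms(7) that] assms(1) by simp
qed

end
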